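(* Let $\Omega\subset\mathbb{R}^N$ be open and bounded, $\alpha\in(0,N)$, $q\in(1,\infty]$ with $q'=q/(q-1)$ ($q'=1$ if $q=\infty$), and let $f \in L^{N/\alpha,q}(\Omega)$. Suppose $\frac{1}{2}\left(N/\alpha+1\right) \leq p<N/\alpha$ and put $\delta_p:= N/p-\alpha>0$. Then $f \in L^{p,1}(\Omega)$, and there exists a constant $C_1=C_1(\alpha,N,q,\Omega)>0$ (independent of $p$ and $f$) such that \[ \|f\|_{L^{p,1}(\Omega)} \leq C_1\delta_p^{-1/q'} \|f\|_{L^{N/\alpha,q}(\Omega)}. \] Moreover, $C_1$ can be chosen such that $C_1\delta_p^{-1/q'} \geq 1$ for all such $p$.
   Context: For a measurable $f$ on $\mathbb{R}^N$ let $f^*$ be its non-increasing rearrangement and $f^{**}(x)=\frac1x\int_0^x f^*(t)\,dt$. For $1<p<\infty$ and $1\le q<\infty$, $\|f\|_{L^{p,q}(\mathbb{R}^N)} = (\int_0^\infty [t^{1/p}f^{**}(t)]^q\,\frac{dt}{t})^{1/q}$, and $\|f\|_{L^{p,\infty}(\mathbb{R}^N)}=\sup_{t>0}t^{1/p}f^{**}(t)$. For $f$ on $\Omega$, $\|f\|_{L^{p,q}(\Omega)}:=\|f\chi_\Omega\|_{L^{p,q}(\mathbb{R}^N)}$, and $L^{p,q}(\Omega)$ is the space of $f$ for which this is finite. *)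

theory Defs
  imports "HOL-Analysis.Analysis"
begin

text \<open>Real power of an extended nonnegative real, for positive exponents r.\<close>
definition enn_powr :: "ennreal \<Rightarrow> real \<Rightarrow> ennreal" where
  "enn_powr x r = (if x = \<infinity> then \<infinity> else ennreal (enn2real x powr r))"

text \<open>Non-increasing rearrangement f*(t) = inf{s \<ge> 0 : |{|f| > s}| \<le> t} (value \<infinity> if empty).\<close>
definition rearr :: "('a::euclidean_space \<Rightarrow> real) \<Rightarrow> real \<Rightarrow> ennreal" where
  "rearr f t = Inf {ennreal s | s. 0 \<le> s \<and> emeasure lebesgue {x. s < \<bar>f x\<bar>} \<le> ennreal t}"

definition maxrearr :: "('a::euclidean_space \<Rightarrow> real) \<Rightarrow> real \<Rightarrow> ennreal" where
  "maxrearr f t = (\<integral>\<^sup>+ s. rearr f s * indicator {0<..<t} s \<partial>lborel) / ennreal t"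

definition lorentz_norm :: "real \<Rightarrow> ennreal \<Rightarrow> ('a::euclidean_space \<Rightarrow> real) \<Rightarrow> ennreal" where
  "lorentz_norm p q f =
    (if q = \<infinity> then (SUP t\<in>{0<..}. ennreal (t powr (1/p)) * maxrearr f t)
     else enn_powr (\<integral>\<^sup>+ t. enn_powr (ennreal (t powr (1/p)) * maxrearr f t) (enn2real q)
                           / ennreal t * indicator {0<..} t \<partial>lborel) (1 / enn2real q))"

definition lorentz_norm_on :: "real \<Rightarrow> ennreal \<Rightarrow> 'a::euclidean_space set \<Rightarrow> ('a \<Rightarrow> real) \<Rightarrow> ennreal" where
  "lorentz_norm_on p q \<Omega> f = lorentz_norm p q (\<lambda>x. f x * indicator \<Omega> x)"

definition in_lorentz :: "real \<Rightarrow> ennreal \<Rightarrow> 'a::euclidean_space set \<Rightarrow> ('a \<Rightarrow> real) \<Rightarrow> bool" where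
  "in_lorentz p q \<Omega> f \<longleftrightarrow> (\<lambda>x. f x * indicator \<Omega> x) \<in> borel_measurable lebesgue
      \<and> lorentz_norm_on p q \<Omega> f < \<infinity>"

text \<open>1/q' where q' is the conjugate exponent of q \<in> (1,\<infinity>] (q' = 1 if q = \<infinity>).\<close>
definition inv_conj :: "ennreal \<Rightarrow> real" where
  "inv_conj q = (if q = \<infinity> then 1 else 1 - 1 / enn2real q)"

end

theory Submission
  imports Defs
begin

text \<open>
  Write r = N/alpha, a = 1/r, b = 1/p and phi = f**, which is finite because f lies in
  L^{r,q}. Then the L^{p,1} norm of f is the integral of t^(b-1) phi(t) over (0, oo), and the
  L^{r,q} norm dominates the weak norm: t^a phi(t) <= c |f|_{r,q}. Since f vanishes outside
  Omega, f* vanishes beyond M >= |Omega|, so t phi(t) is constant on [M, oo) and the integral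
  over [M, oo) is at most c |f|_{r,q} M^(b-a) / (1-b). On (0, M], Hoelder's inequality with
  exponents q' and q gives the bound M^(b-a) (b-a)^(-1/q') |f|_{r,q} (for q = oo, integrate
  the weak bound). As b - a = delta_p / N and 1 - b stays away from 0 when p >= (N/alpha + 1)/2,
  both terms are at most C delta_p^(-1/q') |f|_{r,q}; taking C >= max(1, D) for the
  largest value D of delta_p also gives C delta_p^(-1/q') >= 1, since delta_p^(1/q') <= max(1, D).
\<close>

section \<open>Elementary inequalities and integrals on the half-line\<close>

lemma powr_le_max_1:
  fixes x s :: real
  assumes "0 \<le> x" "0 \<le> s" "s \<le> 1"
  shows "x powr s \<le> max 1 x"
proof (cases "x \<le> 1")
  case True
  then have "x powr s \<le> 1 powr s" using assms by (intro powr_mono2) auto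
  then show ?thesis by simp
next
  case False
  then have "x powr s \<le> x powr 1" using assms by (intro powr_mono) auto
  then show ?thesis using False by simp
qed

lemma one_le_max_1_mult_powr:
  fixes \<delta> D s :: real
  assumes "0 < \<delta>" "\<delta> \<le> D" "0 \<le> s" "s \<le> 1"
  shows "1 \<le> max 1 D * \<delta> powr (- s)"
proof -
  have "\<delta> powr s \<le> max 1 D"
    using powr_le_max_1[of \<delta> s] assms by auto
  then show ?thesis
    using assms(1) by (simp add: powr_minus_divide field_simps)
qed

lemma inverse_one_minus_inverse_le:
  fixes r p :: real
  assumes "1 < r" "(r + 1) / 2 \<le> p"
  shows "1 / (1 - 1 / p) \<le> (r + 1) / (r - 1)"
proof -
  have "1 / p \<le> 1 / ((r + 1) / 2)"
    using assms by (intro divide_left_mono) auto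
  also have "\<dots> = 1 - (r - 1) / (r + 1)"
    using assms by (simp add: field_simps)
  finally have "1 / (1 - 1 / p) \<le> 1 / ((r - 1) / (r + 1))"
    using assms by (intro divide_left_mono) auto
  then show ?thesis
    by simp
qed

lemma Youngs_inequality_scaled:
  fixes p q K L x y :: real
  assumes "1 < p" "1 < q" "1 / p + 1 / q = 1" "0 < K" "0 < L" "0 \<le> x" "0 \<le> y"
  shows "x * y \<le> K * L * ((x / K) powr p / p + (y / L) powr q / q)"
proof -
  have "x * y = K * L * ((x / K) * (y / L))"
    using assms by simp
  also have "\<dots> \<le> K * L * ((x / K) powr p / p + (y / L) powr q / q)"
    using assms by (intro mult_left_mono Youngs_inequality) auto
  finally show ?thesis .
qed

lemma nn_integral_Holder_real:
  fixes u v :: "'a \<Rightarrow> real"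
  assumes meas: "u \<in> borel_measurable M" "v \<in> borel_measurable M"
    and nonneg: "\<And>x. 0 \<le> u x" "\<And>x. 0 \<le> v x"
    and pq: "1 < p" "1 < q" "1 / p + 1 / q = 1"
    and U: "(\<integral>\<^sup>+x. ennreal (u x powr p) \<partial>M) = ennreal U" "0 < U"
    and V: "(\<integral>\<^sup>+x. ennreal (v x powr q) \<partial>M) = ennreal V" "0 < V"
  shows "(\<integral>\<^sup>+x. ennreal (u x * v x) \<partial>M) \<le> ennreal (U powr (1 / p) * V powr (1 / q))"
proof -
  define K where "K = U powr (1 / p)"
  define L where "L = V powr (1 / q)"
  have KL: "0 < K" "0 < L" "K powr p = U" "L powr q = V"
    using U(2) V(2) pq by (simp_all add: K_def L_def powr_powr)
  have pointwise: "ennreal (u x * v x)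
      \<le> ennreal (K * L / (p * U)) * ennreal (u x powr p) + ennreal (K * L / (q * V)) * ennreal (v x powr q)" for x
  proof -
    have "u x * v x \<le> K * L * ((u x / K) powr p / p + (v x / L) powr q / q)"
      using pq KL nonneg by (intro Youngs_inequality_scaled) auto
    also have "\<dots> = K * L / (p * U) * u x powr p + K * L / (q * V) * v x powr q"
      using KL nonneg U(2) V(2) pq by (simp add: powr_divide field_simps)
    finally show ?thesis
      using KL U(2) V(2) pq by (simp add: ennreal_mult[symmetric] ennreal_plus[symmetric] ennreal_leI del: ennreal_plus)
  qed
  have "(\<integral>\<^sup>+x. ennreal (u x * v x) \<partial>M)
      \<le> (\<integral>\<^sup>+x. ennreal (K * L / (p * U)) * ennreal (u x powr p) + ennreal (K * L / (q * V)) * ennreal (v x powr q) \<partial>M)"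
    by (intro nn_integral_mono pointwise)
  also have "\<dots> = ennreal (K * L / (p * U)) * ennreal U + ennreal (K * L / (q * V)) * ennreal V"
    using meas by (simp add: nn_integral_add nn_integral_cmult U(1) V(1))
  also have "\<dots> = ennreal (K * L * (1 / p + 1 / q))"
    using KL U(2) V(2) pq by (simp add: ennreal_mult[symmetric] ennreal_plus[symmetric] field_simps del: ennreal_plus)
  finally show ?thesis
    using pq(3) by (simp add: K_def L_def)
qed

lemma nn_integral_powr_from_0:
  fixes c M :: real
  assumes "0 < c" "0 \<le> M"
  shows "(\<integral>\<^sup>+ t. ennreal (if t \<in> {0..M} then t powr (c - 1) else 0) \<partial>lborel) = ennreal (M powr c / c)"
proof (rule nn_integral_has_integral_lborel)
  have "((\<lambda>t. t powr (c - 1)) has_integral (M powr (c - 1 + 1) / (c - 1 + 1))) {0..M}"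
    using assms by (intro has_integral_powr_from_0) auto
  then show "((\<lambda>t. if t \<in> {0..M} then t powr (c - 1) else 0) has_integral (M powr c / c)) UNIV"
    by (subst has_integral_restrict_UNIV) simp
qed auto

lemma nn_integral_powr_to_infinity:
  fixes c M :: real
  assumes "0 < c" "0 < M"
  shows "(\<integral>\<^sup>+ t. ennreal (if t \<in> {M..} then t powr (- c - 1) else 0) \<partial>lborel) = ennreal (M powr (- c) / c)"
proof (rule nn_integral_has_integral_lborel)
  have "((\<lambda>t. t powr (- c - 1)) has_integral (-(M powr (- c - 1 + 1)) / (- c - 1 + 1))) {M..}"
    using assms by (intro has_integral_powr_to_inf) auto
  then show "((\<lambda>t. if t \<in> {M..} then t powr (- c - 1) else 0) has_integral (M powr (- c) / c)) UNIV"
    by (subst has_integral_restrict_UNIV) simp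
qed auto

lemma pointwise_bound_of_weighted_Lq:
  fixes \<phi> :: "real \<Rightarrow> real"
  assumes nonneg: "\<And>t. 0 \<le> \<phi> t" and antimono: "\<And>s t. 0 < s \<Longrightarrow> s \<le> t \<Longrightarrow> \<phi> t \<le> \<phi> s"
    and a: "0 < a" and q: "0 < q" and t: "0 < t" and "0 \<le> V"
    and V: "(\<integral>\<^sup>+t. ennreal (if 0 < t then (t powr a * \<phi> t) powr q / t else 0) \<partial>lborel) = ennreal V"
  shows "t powr a * \<phi> t \<le> (a * q) powr (1 / q) * V powr (1 / q)"
proof -
  have pointwise: "ennreal (\<phi> t powr q) * ennreal (if s \<in> {0..t} then s powr (a * q - 1) else 0)
      \<le> ennreal (if 0 < s then (s powr a * \<phi> s) powr q / s else 0)" for s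
  proof (cases "s \<in> {0<..t}")
    case True
    then have s: "0 < s" "s \<le> t" by auto
    have "\<phi> t powr q * s powr (a * q - 1) = (s powr a * \<phi> t) powr q / s"
      using s nonneg[of t] by (simp add: powr_mult powr_powr powr_diff mult.commute)
    also have "\<dots> \<le> (s powr a * \<phi> s) powr q / s"
      using s q nonneg antimono[OF s] by (intro divide_right_mono powr_mono2 mult_left_mono) auto
    finally show ?thesis using s
      by (simp add: ennreal_mult[symmetric] ennreal_leI)
  next
    case False
    then show ?thesis by (cases "s = 0") auto
  qed
  have "ennreal (\<phi> t powr q) * ennreal (t powr (a * q) / (a * q))
     = (\<integral>\<^sup>+s. ennreal (\<phi> t powr q) * ennreal (if s \<in> {0..t} then s powr (a * q - 1) else 0) \<partial>lborel)"
    using a q t nn_integral_powr_from_0[of "a * q" t] by (subst nn_integral_cmult) auto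
  also have "\<dots> \<le> ennreal V"
    unfolding V[symmetric] by (intro nn_integral_mono pointwise)
  finally have "\<phi> t powr q * (t powr (a * q) / (a * q)) \<le> V"
    using a q t \<open>0 \<le> V\<close> by (simp add: ennreal_mult[symmetric])
  then have "(\<phi> t powr q * t powr (a * q)) powr (1 / q) \<le> (a * q * V) powr (1 / q)"
    using a q nonneg[of t] by (intro powr_mono2) (auto simp: field_simps)
  then show ?thesis
    using a q nonneg[of t] t by (simp add: powr_mult powr_powr mult.commute)
qed

lemma nn_integral_head_le_sup_bound:
  fixes \<phi> :: "real \<Rightarrow> real"
  assumes nonneg: "\<And>t. 0 \<le> \<phi> t" and M: "0 < M"
    and bound: "\<And>t. 0 < t \<Longrightarrow> t powr a * \<phi> t \<le> B"
    and ab: "a < b"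
  shows "(\<integral>\<^sup>+t. ennreal (if t \<in> {0<..M} then t powr (b - 1) * \<phi> t else 0) \<partial>lborel)
    \<le> ennreal (B * M powr (b - a) / (b - a))"
proof -
  have B: "0 \<le> B" using bound[of 1] nonneg[of 1] by simp
  have pointwise: "ennreal (if t \<in> {0<..M} then t powr (b - 1) * \<phi> t else 0)
     \<le> ennreal B * ennreal (if t \<in> {0..M} then t powr ((b - a) - 1) else 0)" for t
  proof (cases "t \<in> {0<..M}")
    case True
    then have t: "0 < t" by simp
    have "t powr (b - 1) * \<phi> t = t powr ((b - a) - 1) * (t powr a * \<phi> t)"
      using t by (simp add: powr_diff powr_add field_simps)
    also have "\<dots> \<le> t powr ((b - a) - 1) * B"
      using bound[OF t] by (intro mult_left_mono) auto
    finally show ?thesis using True B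
      by (simp add: ennreal_mult[symmetric] ennreal_leI mult.commute)
  qed auto
  have "(\<integral>\<^sup>+t. ennreal (if t \<in> {0<..M} then t powr (b - 1) * \<phi> t else 0) \<partial>lborel)
     \<le> (\<integral>\<^sup>+t. ennreal B * ennreal (if t \<in> {0..M} then t powr ((b - a) - 1) else 0) \<partial>lborel)"
    by (intro nn_integral_mono pointwise)
  also have "\<dots> = ennreal B * ennreal (M powr (b - a) / (b - a))"
    using ab M nn_integral_powr_from_0[of "b - a" M] by (subst nn_integral_cmult) auto
  finally show ?thesis using B ab by (simp add: ennreal_mult[symmetric])
qed

lemma nn_integral_head_le_Holder:
  fixes \<phi> :: "real \<Rightarrow> real"
  assumes meas: "\<phi> \<in> borel_measurable borel" and nonneg: "\<And>t. 0 \<le> \<phi> t"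
    and M: "0 < M" and ab: "a < b" and q: "1 < q" and "0 < V"
    and V: "(\<integral>\<^sup>+t. ennreal (if 0 < t then (t powr a * \<phi> t) powr q / t else 0) \<partial>lborel) = ennreal V"
  shows "(\<integral>\<^sup>+t. ennreal (if t \<in> {0<..M} then t powr (b - 1) * \<phi> t else 0) \<partial>lborel)
    \<le> ennreal (M powr (b - a) * (b - a) powr (- (1 - 1 / q)) * V powr (1 / q))"
proof -
  define q' where "q' = q / (q - 1)"
  define U where "U = M powr ((b - a) * q') / ((b - a) * q')"
  define u where "u t = (if t \<in> {0<..M} then t powr (b - a - 1 + 1 / q) else 0)" for t
  define v where "v t = (if 0 < t then t powr a * \<phi> t * t powr (- 1 / q) else 0)" for t
  have q': "1 < q'" "1 / q' + 1 / q = 1" "1 / q' = 1 - 1 / q" "(b - a - 1 + 1 / q) * q' = (b - a) * q' - 1"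
    using q by (auto simp: q'_def field_simps)
  have "0 < U"
    using M ab q' by (simp add: U_def)
  have "(\<integral>\<^sup>+t. ennreal (u t powr q') \<partial>lborel)
      = (\<integral>\<^sup>+t. ennreal (if t \<in> {0..M} then t powr ((b - a) * q' - 1) else 0) \<partial>lborel)"
    by (intro nn_integral_cong) (auto simp: u_def powr_powr q'(4))
  also have "\<dots> = ennreal U"
    unfolding U_def using ab q' M by (intro nn_integral_powr_from_0) auto
  finally have u_int: "(\<integral>\<^sup>+t. ennreal (u t powr q') \<partial>lborel) = ennreal U" .
  have v_int: "(\<integral>\<^sup>+t. ennreal (v t powr q) \<partial>lborel) = ennreal V"
    unfolding V[symmetric] using q nonneg
    by (intro nn_integral_cong) (auto simp: v_def powr_mult powr_powr powr_minus_divide powr_divide)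
  have "(\<integral>\<^sup>+t. ennreal (if t \<in> {0<..M} then t powr (b - 1) * \<phi> t else 0) \<partial>lborel)
      = (\<integral>\<^sup>+t. ennreal (u t * v t) \<partial>lborel)"
    by (intro nn_integral_cong) (auto simp: u_def v_def powr_add[symmetric] mult_ac)
  also have "\<dots> \<le> ennreal (U powr (1 / q') * V powr (1 / q))"
  proof (rule nn_integral_Holder_real[OF _ _ _ _ q'(1) q q'(2) u_int \<open>0 < U\<close> v_int \<open>0 < V\<close>])
    show "u \<in> borel_measurable lborel" "v \<in> borel_measurable lborel"
      unfolding u_def[abs_def] v_def[abs_def] using meas by measurable
    show "0 \<le> u t" "0 \<le> v t" for t
      using nonneg by (auto simp: u_def v_def)
  qed
  also have "U powr (1 / q') \<le> M powr (b - a) * (b - a) powr (- (1 - 1 / q))"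
  proof -
    have "U powr (1 / q') = M powr (b - a) * ((b - a) * q') powr (- (1 / q'))"
      using M ab q'(1) by (simp add: U_def powr_divide powr_powr powr_minus_divide)
    also have "\<dots> \<le> M powr (b - a) * (b - a) powr (- (1 / q'))"
      using ab q'(1) by (intro mult_left_mono powr_mono2') auto
    finally show ?thesis
      unfolding q'(3) .
  qed
  then have "ennreal (U powr (1 / q') * V powr (1 / q))
      \<le> ennreal (M powr (b - a) * (b - a) powr (- (1 - 1 / q)) * V powr (1 / q))"
    by (intro ennreal_leI mult_right_mono) auto
  finally show ?thesis .
qed

lemma nn_integral_le_head_plus_tail:
  fixes \<phi> :: "real \<Rightarrow> real"
  assumes meas: "\<phi> \<in> borel_measurable borel" and nonneg: "\<And>t. 0 \<le> \<phi> t"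
    and M: "0 < M" and tail: "\<And>t. M \<le> t \<Longrightarrow> \<phi> t * t = \<phi> M * M"
    and bound: "\<And>t. 0 < t \<Longrightarrow> t powr a * \<phi> t \<le> B"
    and b: "b < 1"
  shows "(\<integral>\<^sup>+t. ennreal (if 0 < t then t powr (b - 1) * \<phi> t else 0) \<partial>lborel)
    \<le> (\<integral>\<^sup>+t. ennreal (if t \<in> {0<..M} then t powr (b - 1) * \<phi> t else 0) \<partial>lborel)
       + ennreal (B * M powr (b - a) / (1 - b))"
proof -
  have B: "0 \<le> B" using bound[of 1] nonneg[of 1] by simp
  have MB: "\<phi> M * M \<le> B * M powr (1 - a)"
    using mult_right_mono[OF bound[OF M], of "M powr (1 - a)"] M by (simp add: mult_ac flip: powr_add)
  have pointwise: "ennreal (if 0 < t then t powr (b - 1) * \<phi> t else 0)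
     \<le> ennreal (if t \<in> {0<..M} then t powr (b - 1) * \<phi> t else 0)
       + ennreal (B * M powr (1 - a)) * ennreal (if t \<in> {M..} then t powr (- (1 - b) - 1) else 0)" for t
  proof (cases "M < t")
    case True
    have "\<phi> t = \<phi> M * M / t" using tail[of t] True M by (simp add: field_simps)
    moreover have "t powr (b - 1) / t = t powr (- (1 - b) - 1)"
      using True M by (simp add: powr_diff power2_eq_square)
    ultimately have "t powr (b - 1) * \<phi> t = (\<phi> M * M) * t powr (- (1 - b) - 1)"
      by (metis times_divide_eq_right mult.commute)
    also have "\<dots> \<le> (B * M powr (1 - a)) * t powr (- (1 - b) - 1)"
      using MB by (intro mult_right_mono) auto
    finally show ?thesis using True M B
      by (simp add: ennreal_mult[symmetric] ennreal_leI)
  qed (auto simp: add_increasing2)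
  have "(\<integral>\<^sup>+t. ennreal (if 0 < t then t powr (b - 1) * \<phi> t else 0) \<partial>lborel)
     \<le> (\<integral>\<^sup>+t. ennreal (if t \<in> {0<..M} then t powr (b - 1) * \<phi> t else 0)
       + ennreal (B * M powr (1 - a)) * ennreal (if t \<in> {M..} then t powr (- (1 - b) - 1) else 0) \<partial>lborel)"
    by (intro nn_integral_mono pointwise)
  also have "\<dots> = (\<integral>\<^sup>+t. ennreal (if t \<in> {0<..M} then t powr (b - 1) * \<phi> t else 0) \<partial>lborel)
     + ennreal (B * M powr (1 - a)) * (\<integral>\<^sup>+t. ennreal (if t \<in> {M..} then t powr (- (1 - b) - 1) else 0) \<partial>lborel)"
    by (subst nn_integral_add) (use meas in \<open>auto simp: nn_integral_cmult\<close>)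
  also have "(\<integral>\<^sup>+t. ennreal (if t \<in> {M..} then t powr (- (1 - b) - 1) else 0) \<partial>lborel)
      = ennreal (M powr (- (1 - b)) / (1 - b))"
    using b M by (intro nn_integral_powr_to_infinity) auto
  also have "ennreal (B * M powr (1 - a)) * ennreal (M powr (- (1 - b)) / (1 - b))
      = ennreal (B * M powr (b - a) / (1 - b))"
    using B b by (simp add: ennreal_mult[symmetric] powr_add[symmetric])
  finally show ?thesis .
qed

section \<open>Rearrangements\<close>

lemma borel_measurable_real_monotone:
  fixes f :: "real \<Rightarrow> 'b::{linorder_topology, second_countable_topology}"
  assumes "mono f \<or> antimono f"
  shows "f \<in> borel_measurable borel"
proof (rule borel_measurableI_greater)
  fix c
  have "is_interval {x. c < f x}"
    using assms unfolding is_interval_1 mono_def antimono_def by (auto intro: less_le_trans)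
  then show "{x \<in> space borel. c < f x} \<in> sets borel"
    using real_interval_borel_measurable by simp
qed

lemma rearr_antimono: "s \<le> t \<Longrightarrow> rearr g t \<le> rearr g s"
  unfolding rearr_def
  by (rule Inf_superset_mono) (blast intro: order_trans[OF _ ennreal_leI])

lemma borel_measurable_rearr: "rearr g \<in> borel_measurable borel"
  by (intro borel_measurable_real_monotone disjI2 antimonoI rearr_antimono)

lemma rearr_eq_0:
  assumes "emeasure lebesgue {x. g x \<noteq> 0} \<le> ennreal t"
  shows "rearr g t = 0"
proof -
  have "ennreal 0 \<in> {ennreal s | s. 0 \<le> s \<and> emeasure lebesgue {x. s < \<bar>g x\<bar>} \<le> ennreal t}"
    using assms by (auto intro!: exI[of _ 0])
  then have "rearr g t \<le> ennreal 0"
    unfolding rearr_def by (rule Inf_lower)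
  then show ?thesis by simp
qed

lemma maxrearr_rescale:
  assumes "0 < t"
  shows "maxrearr g t = (\<integral>\<^sup>+ u. rearr g (t * u) * indicator {0<..<1} u \<partial>lborel)"
proof -
  have "(\<lambda>s. rearr g s * indicator {0<..<t} s) \<in> borel_measurable borel"
    using borel_measurable_rearr by measurable
  from nn_integral_real_affine[OF this, of t 0] assms
  have "(\<integral>\<^sup>+ s. rearr g s * indicator {0<..<t} s \<partial>lborel)
      = ennreal t * (\<integral>\<^sup>+ u. rearr g (t * u) * indicator {0<..<t} (t * u) \<partial>lborel)"
    by simp
  also have "(\<lambda>u. rearr g (t * u) * indicator {0<..<t} (t * u))
      = (\<lambda>u. rearr g (t * u) * indicator {0<..<1} u)"
    using assms by (auto simp: indicator_def zero_less_mult_iff fun_eq_iff)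
  finally have "(\<integral>\<^sup>+ s. rearr g s * indicator {0<..<t} s \<partial>lborel)
      = (\<integral>\<^sup>+ u. rearr g (t * u) * indicator {0<..<1} u \<partial>lborel) * ennreal t"
    by (simp add: mult.commute)
  then show ?thesis
    unfolding maxrearr_def using assms by (simp add: ennreal_mult_divide_eq)
qed

lemma maxrearr_antimono:
  assumes "0 < s" "s \<le> t"
  shows "maxrearr g t \<le> maxrearr g s"
proof -
  have "rearr g (t * u) * indicator {0<..<1} u \<le> rearr g (s * u) * indicator {0<..<1} u" for u
  proof (cases "u \<in> {0<..<1}")
    case True
    then have "s * u \<le> t * u" using assms by (intro mult_right_mono) auto
    then show ?thesis using True by (simp add: rearr_antimono)
  qed simp
  then show ?thesis
    using assms by (simp add: maxrearr_rescale nn_integral_mono)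
qed

lemma borel_measurable_maxrearr: "maxrearr g \<in> borel_measurable borel"
proof -
  have "mono (\<lambda>t. \<integral>\<^sup>+ x. rearr g x * indicator {0<..<t} x \<partial>lborel)"
    by (intro monoI nn_integral_mono mult_left_mono) (auto simp: indicator_def)
  then have "(\<lambda>t. \<integral>\<^sup>+ x. rearr g x * indicator {0<..<t} x \<partial>lborel) \<in> borel_measurable borel"
    by (intro borel_measurable_real_monotone) simp
  then show ?thesis unfolding maxrearr_def[abs_def] by measurable
qed

lemma enn2real_maxrearr_mult_eq_beyond_support:
  assumes "\<And>s. M \<le> s \<Longrightarrow> rearr g s = 0" "0 < M" "M \<le> t"
  shows "enn2real (maxrearr g t) * t = enn2real (maxrearr g M) * M"
proof -
  have "(\<integral>\<^sup>+ x. rearr g x * indicator {0<..<t} x \<partial>lborel)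
      = (\<integral>\<^sup>+ x. rearr g x * indicator {0<..<M} x \<partial>lborel)"
    by (rule nn_integral_cong) (use assms in \<open>auto simp: indicator_def\<close>)
  then have "maxrearr g t * ennreal t = maxrearr g M * ennreal M"
    unfolding maxrearr_def using assms by (simp add: ennreal_divide_times ennreal_divide_self)
  then have "enn2real (maxrearr g t * ennreal t) = enn2real (maxrearr g M * ennreal M)"
    by simp
  then show ?thesis
    using assms by (simp add: enn2real_mult)
qed

section \<open>Lorentz norms\<close>

lemma enn_powr_ennreal: "0 \<le> x \<Longrightarrow> enn_powr (ennreal x) c = ennreal (x powr c)"
  by (simp add: enn_powr_def)

lemma enn_powr_top: "enn_powr top c = top"
  by (simp add: enn_powr_def)

lemma enn_powr_1: "enn_powr x 1 = x"
  by (cases x) (auto simp: enn_powr_def)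

lemma maxrearr_finite:
  assumes fin: "lorentz_norm r q g < \<infinity>" and t: "0 < t"
  shows "maxrearr g t < \<infinity>"
proof (rule ccontr)
  assume "\<not> maxrearr g t < \<infinity>"
  then have "maxrearr g s = \<infinity>" if "s \<in> {0<..<t}" for s
    using maxrearr_antimono[of s t g] that by (simp add: less_top[symmetric] top_unique)
  then have infinite: "ennreal (s powr (1 / r)) * maxrearr g s = \<infinity>" if "s \<in> {0<..<t}" for s
    using that by (simp add: ennreal_mult_top)
  show False
  proof (cases "q = \<infinity>")
    case True
    have "ennreal ((t/2) powr (1 / r)) * maxrearr g (t/2) \<le> lorentz_norm r q g"
      unfolding lorentz_norm_def using True t by (auto intro!: SUP_upper)
    then show False using infinite[of "t/2"] t fin by simp
  next
    case False
    have "(\<integral>\<^sup>+s. \<infinity> * indicator {0<..<t} s \<partial>lborel)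
      \<le> (\<integral>\<^sup>+s. enn_powr (ennreal (s powr (1 / r)) * maxrearr g s) (enn2real q)
                 / ennreal s * indicator {0<..} s \<partial>lborel)"
    proof (intro nn_integral_mono)
      fix s
      show "\<infinity> * indicator {0<..<t} s \<le> enn_powr (ennreal (s powr (1 / r)) * maxrearr g s) (enn2real q)
                 / ennreal s * indicator {0<..} s"
        by (cases "s \<in> {0<..<t}") (auto simp: infinite enn_powr_top ennreal_top_divide)
    qed
    moreover have "(\<integral>\<^sup>+s. \<infinity> * indicator {0<..<t} s \<partial>lborel) = \<infinity>"
      using t by (simp add: nn_integral_cmult)
    ultimately have "lorentz_norm r q g = \<infinity>"
      unfolding lorentz_norm_def using False by (simp add: enn_powr_top top_unique)
    then show False using fin by simp
  qed
qed

lemma enn2real_maxrearr_antimono: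
  assumes "lorentz_norm r q g < \<infinity>" "0 < s" "s \<le> t"
  shows "enn2real (maxrearr g t) \<le> enn2real (maxrearr g s)"
  using assms maxrearr_antimono[of s t g] maxrearr_finite[of r q g s]
  by (intro enn2real_mono) auto

lemma lorentz_norm_eq_real_integral:
  assumes fin: "\<And>t. 0 < t \<Longrightarrow> maxrearr g t < \<infinity>" and q: "q \<noteq> \<infinity>"
  shows "lorentz_norm r q g = enn_powr (\<integral>\<^sup>+t. ennreal (if 0 < t then
      (t powr (1 / r) * enn2real (maxrearr g t)) powr (enn2real q) / t else 0) \<partial>lborel) (1 / enn2real q)"
proof -
  have "enn_powr (ennreal (t powr (1 / r)) * maxrearr g t) (enn2real q) / ennreal t * indicator {0<..} t
     = ennreal (if 0 < t then (t powr (1 / r) * enn2real (maxrearr g t)) powr (enn2real q) / t else 0)" for t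
  proof (cases "0 < t")
    case True
    then have "ennreal (t powr (1 / r)) * maxrearr g t = ennreal (t powr (1 / r) * enn2real (maxrearr g t))"
      using fin by (simp add: ennreal_mult less_top)
    then show ?thesis using True
      by (simp add: enn_powr_ennreal divide_ennreal)
  qed simp
  then show ?thesis unfolding lorentz_norm_def using q by simp
qed

lemma lorentz_norm_1_eq_real_integral:
  assumes "\<And>t. 0 < t \<Longrightarrow> maxrearr g t < \<infinity>"
  shows "lorentz_norm p 1 g = (\<integral>\<^sup>+t. ennreal (if 0 < t then
      t powr (1 / p - 1) * enn2real (maxrearr g t) else 0) \<partial>lborel)"
proof -
  have "(t powr (1 / p) * enn2real (maxrearr g t)) / t = t powr (1 / p - 1) * enn2real (maxrearr g t)"
    if "0 < t" for t
    using that by (simp add: powr_diff)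
  then show ?thesis
    using lorentz_norm_eq_real_integral[OF assms, of 1 p] by (simp add: enn_powr_1 if_distrib cong: if_cong)
qed

lemma lorentz_norm_finite_exponentE:
  assumes fin: "lorentz_norm r q g < \<infinity>" and q: "q \<noteq> \<infinity>"
  obtains V where "0 \<le> V"
    and "(\<integral>\<^sup>+t. ennreal (if 0 < t then (t powr (1 / r) * enn2real (maxrearr g t)) powr (enn2real q) / t
           else 0) \<partial>lborel) = ennreal V"
    and "lorentz_norm r q g = ennreal (V powr (1 / enn2real q))"
proof -
  let ?I = "\<integral>\<^sup>+t. ennreal (if 0 < t then (t powr (1 / r) * enn2real (maxrearr g t)) powr (enn2real q) / t
           else 0) \<partial>lborel"
  have norm: "lorentz_norm r q g = enn_powr ?I (1 / enn2real q)"
    using maxrearr_finite[OF fin] q by (rule lorentz_norm_eq_real_integral)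
  have "?I < top"
  proof (rule ccontr)
    assume "\<not> ?I < top"
    then show False using norm fin by (simp add: less_top[symmetric] enn_powr_top)
  qed
  then have I: "?I = ennreal (enn2real ?I)"
    by simp
  show ?thesis
  proof (rule that)
    show "lorentz_norm r q g = ennreal (enn2real ?I powr (1 / enn2real q))"
      unfolding norm by (subst I) (simp add: enn_powr_ennreal)
  qed (use I in auto)
qed

lemma powr_maxrearr_le_lorentz_norm_infinity:
  assumes fin: "lorentz_norm r \<infinity> g < \<infinity>" and t: "0 < t"
  shows "t powr (1 / r) * enn2real (maxrearr g t) \<le> enn2real (lorentz_norm r \<infinity> g)"
proof -
  have "ennreal (t powr (1 / r)) * maxrearr g t \<le> lorentz_norm r \<infinity> g"
    unfolding lorentz_norm_def using t by (auto intro!: SUP_upper)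
  then have "ennreal (t powr (1 / r) * enn2real (maxrearr g t)) \<le> lorentz_norm r \<infinity> g"
    using maxrearr_finite[OF fin t] by (simp add: ennreal_mult less_top)
  then have "enn2real (ennreal (t powr (1 / r) * enn2real (maxrearr g t))) \<le> enn2real (lorentz_norm r \<infinity> g)"
    using fin by (intro enn2real_mono) auto
  then show ?thesis by simp
qed

lemma powr_maxrearr_le_lorentz_norm:
  assumes fin: "lorentz_norm r q g < \<infinity>" and r: "0 < r" and q: "1 \<le> q" and t: "0 < t"
  shows "t powr (1 / r) * enn2real (maxrearr g t) \<le> max 1 (enn2real q / r) * enn2real (lorentz_norm r q g)"
proof (cases "q = \<infinity>")
  case True
  \<comment> \<open>here enn2real q = 0, so the constant is 1\<close>
  then show ?thesis using powr_maxrearr_le_lorentz_norm_infinity[of r g t] fin t by simp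
next
  case False
  define qr where "qr = enn2real q"
  have qr: "1 \<le> qr" using enn2real_mono[OF q] False by (simp add: qr_def less_top)
  obtain V where V: "0 \<le> V"
    "(\<integral>\<^sup>+t. ennreal (if 0 < t then (t powr (1 / r) * enn2real (maxrearr g t)) powr qr / t
       else 0) \<partial>lborel) = ennreal V"
    and norm: "lorentz_norm r q g = ennreal (V powr (1 / qr))"
    using lorentz_norm_finite_exponentE[OF fin False] unfolding qr_def by blast
  have "t powr (1 / r) * enn2real (maxrearr g t) \<le> (1 / r * qr) powr (1 / qr) * V powr (1 / qr)"
    using r qr t V fin
    by (intro pointwise_bound_of_weighted_Lq[of "\<lambda>t. enn2real (maxrearr g t)"] enn2real_maxrearr_antimono) auto
  also have "\<dots> \<le> max 1 (1 / r * qr) * V powr (1 / qr)"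
    using r qr by (intro mult_right_mono powr_le_max_1) auto
  finally show ?thesis by (simp add: norm qr_def)
qed

lemma lorentz_head_integral_le:
  assumes fin: "lorentz_norm r q g < \<infinity>" and r: "0 < r" and q: "1 < q" and M: "0 < M" and b: "1 / r < b"
  shows "(\<integral>\<^sup>+t. ennreal (if t \<in> {0<..M} then t powr (b - 1) * enn2real (maxrearr g t) else 0) \<partial>lborel)
    \<le> ennreal (M powr (b - 1 / r) * (b - 1 / r) powr (- inv_conj q) * enn2real (lorentz_norm r q g))"
proof (cases "q = \<infinity>")
  case True
  have "(\<integral>\<^sup>+t. ennreal (if t \<in> {0<..M} then t powr (b - 1) * enn2real (maxrearr g t) else 0) \<partial>lborel)
      \<le> ennreal (enn2real (lorentz_norm r q g) * M powr (b - 1 / r) / (b - 1 / r))"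
    using fin True M b powr_maxrearr_le_lorentz_norm_infinity[of r g]
    by (intro nn_integral_head_le_sup_bound) auto
  then show ?thesis
    using True b by (simp add: inv_conj_def powr_minus_divide mult.commute)
next
  case False
  define qr where "qr = enn2real q"
  have qr: "1 < qr" using q False by (cases q) (auto simp: qr_def)
  obtain V where "0 \<le> V"
    and V: "(\<integral>\<^sup>+t. ennreal (if 0 < t then (t powr (1 / r) * enn2real (maxrearr g t)) powr qr / t
       else 0) \<partial>lborel) = ennreal V"
    and norm: "lorentz_norm r q g = ennreal (V powr (1 / qr))"
    using lorentz_norm_finite_exponentE[OF fin False] unfolding qr_def by blast
  show ?thesis
  proof (cases "V = 0")
    case True
    \<comment> \<open>Hoelder's inequality needs V > 0; for V = 0 the weak bound already forces f** = 0\<close>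
    have "t powr (1 / r) * enn2real (maxrearr g t) \<le> 0" if "0 < t" for t
      using powr_maxrearr_le_lorentz_norm[OF fin r _ that] q True norm by simp
    then have "(\<integral>\<^sup>+t. ennreal (if t \<in> {0<..M} then t powr (b - 1) * enn2real (maxrearr g t) else 0) \<partial>lborel)
        \<le> ennreal (0 * M powr (b - 1 / r) / (b - 1 / r))"
      using M b by (intro nn_integral_head_le_sup_bound) auto
    then show ?thesis by simp
  next
    case False
    have "(\<integral>\<^sup>+t. ennreal (if t \<in> {0<..M} then t powr (b - 1) * enn2real (maxrearr g t) else 0) \<partial>lborel)
        \<le> ennreal (M powr (b - 1 / r) * (b - 1 / r) powr (- (1 - 1 / qr)) * V powr (1 / qr))"
      using M b qr False \<open>0 \<le> V\<close> V borel_measurable_maxrearr[of g]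
      by (intro nn_integral_head_le_Holder) auto
    then show ?thesis
      using \<open>q \<noteq> \<infinity>\<close> \<open>0 \<le> V\<close> by (simp add: norm inv_conj_def qr_def)
  qed
qed

lemma lorentz_norm_1_le:
  assumes fin: "lorentz_norm r q g < \<infinity>" and q: "1 < q" and M: "0 < M"
    and supp: "\<And>t. M \<le> t \<Longrightarrow> rearr g t = 0" and p: "1 < p" "p < r"
  shows "lorentz_norm p 1 g
    \<le> ennreal (M powr (1 / p - 1 / r) * ((1 / p - 1 / r) powr (- inv_conj q) + max 1 (enn2real q / r) / (1 - 1 / p)))
      * lorentz_norm r q g"
proof -
  define \<phi> where "\<phi> t = enn2real (maxrearr g t)" for t
  define Q where "Q = enn2real (lorentz_norm r q g)"
  define E where "E = max 1 (enn2real q / r)"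
  define A where "A = M powr (1 / p - 1 / r)"
  have r: "0 < r" and b: "1 / r < 1 / p" "1 / p < 1"
    using p by (auto intro!: divide_strict_left_mono)
  have "0 \<le> Q" "1 \<le> E" "0 \<le> A" "0 \<le> \<phi> t" for t
    by (simp_all add: Q_def E_def A_def \<phi>_def)
  have tail: "\<phi> t * t = \<phi> M * M" if "M \<le> t" for t
    unfolding \<phi>_def using supp M that by (rule enn2real_maxrearr_mult_eq_beyond_support)
  have bound: "t powr (1 / r) * \<phi> t \<le> E * Q" if "0 < t" for t
    using powr_maxrearr_le_lorentz_norm[OF fin r _ that] q unfolding \<phi>_def E_def Q_def by simp
  have "lorentz_norm p 1 g = (\<integral>\<^sup>+t. ennreal (if 0 < t then t powr (1 / p - 1) * \<phi> t else 0) \<partial>lborel)"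
    unfolding \<phi>_def using maxrearr_finite[OF fin] by (rule lorentz_norm_1_eq_real_integral)
  also have "\<dots> \<le> (\<integral>\<^sup>+t. ennreal (if t \<in> {0<..M} then t powr (1 / p - 1) * \<phi> t else 0) \<partial>lborel)
      + ennreal (E * Q * A / (1 - 1 / p))"
    unfolding A_def
  proof (rule nn_integral_le_head_plus_tail[OF _ \<open>0 \<le> \<phi> _\<close> M tail bound])
    show "\<phi> \<in> borel_measurable borel"
      unfolding \<phi>_def[abs_def] using borel_measurable_maxrearr[of g] by measurable
  qed (use b in auto)
  also have "\<dots> \<le> ennreal (A * (1 / p - 1 / r) powr (- inv_conj q) * Q) + ennreal (E * Q * A / (1 - 1 / p))"
    using lorentz_head_integral_le[OF fin r q M b(1)] unfolding \<phi>_def Q_def A_def by (rule add_right_mono)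
  also have "\<dots> = ennreal (A * ((1 / p - 1 / r) powr (- inv_conj q) + E / (1 - 1 / p)) * Q)"
    using \<open>0 \<le> Q\<close> \<open>1 \<le> E\<close> \<open>0 \<le> A\<close> b
    by (simp add: field_simps flip: ennreal_plus)
  finally show ?thesis
    using \<open>0 \<le> Q\<close> \<open>1 \<le> E\<close> \<open>0 \<le> A\<close> b fin by (simp add: ennreal_mult Q_def E_def A_def)
qed

lemma lorentz_norm_on_1_le:
  fixes \<Omega> :: "'a::euclidean_space set"
  assumes \<Omega>: "\<Omega> \<in> lmeasurable" and f: "in_lorentz r q \<Omega> f" and q: "1 < q" and p: "1 < p" "p < r"
  defines "M \<equiv> max 1 (measure lebesgue \<Omega>)"
  shows "in_lorentz p 1 \<Omega> f \<and> lorentz_norm_on p 1 \<Omega> f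
    \<le> ennreal (M powr (1 / p - 1 / r) * ((1 / p - 1 / r) powr (- inv_conj q) + max 1 (enn2real q / r) / (1 - 1 / p)))
      * lorentz_norm_on r q \<Omega> f"
proof -
  have fin: "lorentz_norm r q (\<lambda>x. f x * indicator \<Omega> x) < \<infinity>"
    using f by (simp add: in_lorentz_def lorentz_norm_on_def)
  have supp: "rearr (\<lambda>x. f x * indicator \<Omega> x) t = 0" if "M \<le> t" for t
  proof (rule rearr_eq_0)
    have "emeasure lebesgue {x. f x * indicator \<Omega> x \<noteq> 0} \<le> emeasure lebesgue \<Omega>"
      using \<Omega> by (intro emeasure_mono) (auto simp: indicator_def)
    also have "\<dots> \<le> ennreal t"
      using \<Omega> that by (simp add: emeasure_eq_measure2 M_def)
    finally show "emeasure lebesgue {x. f x * indicator \<Omega> x \<noteq> 0} \<le> ennreal t" .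
  qed
  have "0 < M"
    by (simp add: M_def)
  from lorentz_norm_1_le[OF fin q this supp p] show ?thesis
    using f fin by (auto simp: in_lorentz_def lorentz_norm_on_def ennreal_mult_less_top le_less_trans)
qed

lemma lemma3p2_constant_bounds:
  fixes N \<alpha> p s M E :: real
  assumes \<alpha>: "0 < \<alpha>" "\<alpha> < N" and p: "(N / \<alpha> + 1) / 2 \<le> p" "p < N / \<alpha>"
    and s: "0 < s" "s \<le> 1" and M: "1 \<le> M" and E: "1 \<le> E"
  defines "C \<equiv> M * max 1 (N / ((N / \<alpha> + 1) / 2) - \<alpha>) * (max 1 N + E * ((N / \<alpha> + 1) / (N / \<alpha> - 1)))"
  shows "M powr (1 / p - 1 / (N / \<alpha>)) * ((1 / p - 1 / (N / \<alpha>)) powr (- s) + E / (1 - 1 / p))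
      \<le> C * (N / p - \<alpha>) powr (- s)"
    and "1 \<le> C * (N / p - \<alpha>) powr (- s)"
proof -
  define r where "r = N / \<alpha>"
  define \<delta> where "\<delta> = N / p - \<alpha>"
  define x where "x = 1 / p - 1 / r"
  define K where "K = (r + 1) / (r - 1)"
  define W where "W = max 1 (N / ((r + 1) / 2) - \<alpha>) * \<delta> powr (- s)"
  have r: "1 < r" and p: "(r + 1) / 2 \<le> p" "p < r" and p1: "1 < p"
    using \<alpha> p by (auto simp: r_def)
  have "0 < \<delta>"
    using p(2) p1 \<alpha> by (simp add: \<delta>_def r_def field_simps)
  moreover have "\<delta> \<le> N / ((r + 1) / 2) - \<alpha>"
    using p(1) r \<alpha> unfolding \<delta>_def by (intro diff_right_mono divide_left_mono) auto
  ultimately have W: "1 \<le> W"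
    unfolding W_def using s by (intro one_le_max_1_mult_powr) auto
  have x: "x = \<delta> / N" "0 < x" "x \<le> 1"
  proof -
    show "x = \<delta> / N"
      using \<alpha> p1 by (simp add: x_def \<delta>_def r_def field_simps)
    then show "0 < x"
      using \<alpha> \<open>0 < \<delta>\<close> by simp
    have "1 / p \<le> 1" "0 \<le> 1 / r"
      using p1 r by auto
    then show "x \<le> 1"
      unfolding x_def by linarith
  qed
  have "M powr x \<le> M powr 1"
    using M x by (intro powr_mono) auto
  moreover have "x powr (- s) \<le> max 1 N * \<delta> powr (- s)"
    using \<alpha> \<open>0 < \<delta>\<close> powr_le_max_1[of N s] s unfolding x(1)
    by (simp add: powr_divide powr_minus_divide divide_right_mono)
  moreover have "E * (1 / (1 - 1 / p)) \<le> E * K"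
    using E r p unfolding K_def by (intro mult_left_mono inverse_one_minus_inverse_le) auto
  ultimately have "M powr x * (x powr (- s) + E / (1 - 1 / p)) \<le> M * (max 1 N * \<delta> powr (- s) + E * K)"
    using M E p1 by (intro mult_mono add_mono) auto
  also have "\<dots> \<le> M * (max 1 N * \<delta> powr (- s) * max 1 (N / ((r + 1) / 2) - \<alpha>) + E * K * W)"
  proof -
    have le_mult: "y \<le> y * c" if "0 \<le> y" "1 \<le> c" for y c :: real
      using mult_left_mono[OF that(2,1)] by simp
    show ?thesis
      using M E r W by (intro mult_left_mono add_mono le_mult) (auto simp: K_def)
  qed
  also have "\<dots> = C * (N / p - \<alpha>) powr (- s)"
    by (simp add: C_def K_def W_def r_def \<delta>_def algebra_simps)
  finally show "M powr (1 / p - 1 / (N / \<alpha>)) * ((1 / p - 1 / (N / \<alpha>)) powr (- s) + E / (1 - 1 / p))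
      \<le> C * (N / p - \<alpha>) powr (- s)"
    by (simp add: x_def r_def)
  have "0 \<le> E * K"
    using E r by (auto simp: K_def)
  then have "1 * 1 \<le> M * (max 1 N + E * K)"
    using M by (intro mult_mono) auto
  then have "1 * 1 \<le> M * (max 1 N + E * K) * W"
    using W by (intro mult_mono) auto
  then show "1 \<le> C * (N / p - \<alpha>) powr (- s)"
    by (simp add: C_def K_def W_def r_def \<delta>_def ac_simps)
qed

theorem lemma3p2:
  fixes \<Omega> :: "'a::euclidean_space set" and \<alpha> :: real and q :: ennreal
  assumes "open \<Omega>" and "bounded \<Omega>"
    and "0 < \<alpha>" and "\<alpha> < real DIM('a)"
    and "1 < q"
  shows "\<exists>C1>0.
     (\<forall>p f. in_lorentz (real DIM('a) / \<alpha>) q \<Omega> f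
        \<longrightarrow> (real DIM('a) / \<alpha> + 1) / 2 \<le> p \<longrightarrow> p < real DIM('a) / \<alpha>
        \<longrightarrow> in_lorentz p 1 \<Omega> f
          \<and> lorentz_norm_on p 1 \<Omega> f
              \<le> ennreal (C1 * (real DIM('a) / p - \<alpha>) powr (- inv_conj q))
                 * lorentz_norm_on (real DIM('a) / \<alpha>) q \<Omega> f)
   \<and> (\<forall>p. (real DIM('a) / \<alpha> + 1) / 2 \<le> p \<longrightarrow> p < real DIM('a) / \<alpha>
        \<longrightarrow> 1 \<le> C1 * (real DIM('a) / p - \<alpha>) powr (- inv_conj q))"
proof -
  let ?N = "real DIM('a)" and ?s = "inv_conj q"
  define M where "M = max 1 (measure lebesgue \<Omega>)"
  define E where "E = max 1 (enn2real q / (?N / \<alpha>))"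
  define C where "C = M * max 1 (?N / ((?N / \<alpha> + 1) / 2) - \<alpha>) * (max 1 ?N + E * ((?N / \<alpha> + 1) / (?N / \<alpha> - 1)))"
  have \<alpha>: "0 < \<alpha>" "\<alpha> < ?N" and r: "1 < ?N / \<alpha>" and "1 \<le> M" "1 \<le> E"
    using assms by (simp_all add: M_def E_def)
  have s: "0 < ?s" "?s \<le> 1"
    using \<open>1 < q\<close> by (cases q) (auto simp: inv_conj_def)
  have \<Omega>: "\<Omega> \<in> lmeasurable"
    using assms(1,2) by (rule lmeasurable_open[rotated])
  note C_bound = lemma3p2_constant_bounds[OF \<alpha> _ _ s \<open>1 \<le> M\<close> \<open>1 \<le> E\<close>, folded C_def]
  have "0 < C"
    using \<open>1 \<le> M\<close> \<open>1 \<le> E\<close> r unfolding C_def by (intro mult_pos_pos add_pos_nonneg) auto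
  moreover have "in_lorentz p 1 \<Omega> f \<and> lorentz_norm_on p 1 \<Omega> f
      \<le> ennreal (C * (?N / p - \<alpha>) powr (- ?s)) * lorentz_norm_on (?N / \<alpha>) q \<Omega> f"
    if f: "in_lorentz (?N / \<alpha>) q \<Omega> f" and p: "(?N / \<alpha> + 1) / 2 \<le> p" "p < ?N / \<alpha>" for p f
  proof -
    have "1 < p"
      using p(1) r by (simp add: field_simps)
    from lorentz_norm_on_1_le[OF \<Omega> f \<open>1 < q\<close> this p(2), folded M_def E_def] C_bound(1)[OF p]
    show ?thesis
      by (meson ennreal_leI mult_right_mono order_trans zero_le)
  qed
  ultimately show ?thesis
    using C_bound(2) by blast
qed

end
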